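(* Let $S=(N,M_0)$ be any Petri net system and $S^\Theta=(N^\Theta,M_0^\Theta)$ the system obtained from $S$ by the transformation $\Theta$. Then: (1) If $S$ is a 1S system then $S^\Theta$ is a 1S system; if $S$ is homogeneous then $S^\Theta$ is homogeneous; if $S$ is an H1S-WMG$_\le$ then $S^\Theta$ is an H1S-WMG$_\le$; if $S$ is a strongly connected H1S-WMG$_\le$ whose shared place deletion (if any) yields a strongly connected WMG$_\le$, then $S^\Theta$ also has these properties. (2) For each sequence $\alpha$ feasible in $S$, the expanded sequence $\theta(\alpha)$ is feasible in $S^\Theta$. (3) For each sequence $\beta'$ feasible in $S^\Theta$, the reduced sequence $\beta=\hat\theta(\beta')$ is also feasible in $S^\Theta$, and there is a sequence $\alpha$ feasible in $S$ such that $\theta(\alpha)$ is feasible in $S^\Theta$ and $\mathbf{P}(\theta(\alpha))=\mathbf{P}(\beta)$. (4) If each place of $S$ has a (finite) structural bound, then each place of $S^\Theta$ has a (finite) structural bound. (5) $S^\Theta$ is deadlockable iff $S$ is deadlockable. (6) $S^\Theta$ is live iff $S$ is live.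
   Context: A Petri net is $N=(P,T,W)$ with finite disjoint sets $P$, $T$ and weights $W:(P\times T)\cup(T\times P)\to\mathbb{N}$; incidence matrix $I(p,t)=W(t,p)-W(p,t)$; ${}^\bullet n=\{n':W(n',n)>0\}$, $n^\bullet=\{n':W(n,n')>0\}$. Transition $t$ is enabled at $M$ if $M(p)\ge W(p,t)$ for all $p$; firing yields $M+I[\cdot,t]$; $\mathbf{P}(\sigma)$ is the Parikh vector. A system is live if for every transition $t$ and every reachable marking $M'$ some marking reachable from $M'$ enables $t$; it is deadlockable if some reachable marking enables no transition. A place is shared if it has at least two outputs; 1S means at most one shared place; homogeneous means for each place all its output weights are equal; H1S-WMG$_\le$: homogeneous, at most one shared place, and deleting the shared place (if any) with its arcs, keeping all transitions, yields a net whose places each have at most one input and at most one output. Strongly connected refers to the bipartite graph on $P\cup T$ with arcs $(x,y)$ for $W(x,y)>0$. The structural bound of place $p$ is $SB(p,S)=\max\{M(p): M\in\mathbb{N}^P, \exists Y\in\mathbb{N}^T, M=M_0+I\cdot Y\}$ when finite. Transformation $\Theta$: start from $(N,M_0)$; for each pair $(p,t)$ of the original net $N$ with $p^\bullet=\{t\}$ and $|{}^\bullet t|\ge 2$, add two places $p_a^{(p,t)}$ (initial marking $0$) and $p_b^{(p,t)}$ (initial marking $1$), a transition $t_p^{(p,t)}$, arcs with $W(p,t_p^{(p,t)})=W(p,t)$ and $W(t_p^{(p,t)},p_a^{(p,t)})=W(p_a^{(p,t)},t)=W(t,p_b^{(p,t)})=W(p_b^{(p,t)},t_p^{(p,t)})=1$,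 and remove the arc $(p,t)$. Let $NewTrans$ be the set of added transitions. For a transition $t$ of $N$, let $NewTransPre(t)=NewTrans\cap{}^\bullet({}^\bullet t)$ (computed in $N^\Theta$), and $Seq(A)$ the sequence firing each transition of $A$ once in a fixed order ($\epsilon$ if $A=\emptyset$). Expanded sequence: $\theta(\epsilon)=\epsilon$ and $\theta(t\alpha')=Seq(NewTransPre(t))\,t\,\theta(\alpha')$. Reduced sequence: for a sequence $\beta'$ of $S^\Theta$, $\hat\theta(\beta')$ is obtained by removing each occurrence of a new transition $t_p^{(p,t)}$ after which no occurrence of $t$ (the unique transition with $\{t\}=(t_p^{(p,t)\bullet})^\bullet$) appears in $\beta'$. *)

theory Defs
  imports Main
begin

text \<open>A Petri net N = (P,T,W): the weight function W on (P x T) and (T x P) is split into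
  pre (arcs place -> transition) and post (arcs transition -> place).\<close>

record ('p,'t) pnet =
  places :: "'p set"
  transs :: "'t set"
  pre    :: "'p \<Rightarrow> 't \<Rightarrow> nat"
  post   :: "'t \<Rightarrow> 'p \<Rightarrow> nat"

definition wf_net :: "('p,'t) pnet \<Rightarrow> bool" where
  "wf_net N \<longleftrightarrow> finite (places N) \<and> finite (transs N) \<and>
     (\<forall>p t. pre N p t > 0 \<longrightarrow> p \<in> places N \<and> t \<in> transs N) \<and>
     (\<forall>t p. post N t p > 0 \<longrightarrow> p \<in> places N \<and> t \<in> transs N)"

definition inc :: "('p,'t) pnet \<Rightarrow> 'p \<Rightarrow> 't \<Rightarrow> int" where
  "inc N p t = int (post N t p) - int (pre N p t)"

definition preP :: "('p,'t) pnet \<Rightarrow> 'p \<Rightarrow> 't set" where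
  "preP N p = {t \<in> transs N. post N t p > 0}"
definition postP :: "('p,'t) pnet \<Rightarrow> 'p \<Rightarrow> 't set" where
  "postP N p = {t \<in> transs N. pre N p t > 0}"
definition preT :: "('p,'t) pnet \<Rightarrow> 't \<Rightarrow> 'p set" where
  "preT N t = {p \<in> places N. pre N p t > 0}"
definition postT :: "('p,'t) pnet \<Rightarrow> 't \<Rightarrow> 'p set" where
  "postT N t = {p \<in> places N. post N t p > 0}"

definition enabled :: "('p,'t) pnet \<Rightarrow> ('p \<Rightarrow> nat) \<Rightarrow> 't \<Rightarrow> bool" where
  "enabled N M t \<longleftrightarrow> (\<forall>p \<in> places N. M p \<ge> pre N p t)"

definition fire :: "('p,'t) pnet \<Rightarrow> ('p \<Rightarrow> nat) \<Rightarrow> 't \<Rightarrow> ('p \<Rightarrow> nat)" where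
  "fire N M t = (\<lambda>p. nat (int (M p) + inc N p t))"

fun run :: "('p,'t) pnet \<Rightarrow> ('p \<Rightarrow> nat) \<Rightarrow> 't list \<Rightarrow> ('p \<Rightarrow> nat) option" where
  "run N M [] = Some M"
| "run N M (t # \<sigma>) =
     (if t \<in> transs N \<and> enabled N M t then run N (fire N M t) \<sigma> else None)"

definition feasible :: "('p,'t) pnet \<Rightarrow> ('p \<Rightarrow> nat) \<Rightarrow> 't list \<Rightarrow> bool" where
  "feasible N M \<sigma> \<longleftrightarrow> run N M \<sigma> \<noteq> None"

definition reach :: "('p,'t) pnet \<Rightarrow> ('p \<Rightarrow> nat) \<Rightarrow> ('p \<Rightarrow> nat) set" where
  "reach N M = {M'. \<exists>\<sigma>. run N M \<sigma> = Some M'}"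

definition parikh :: "'t list \<Rightarrow> 't \<Rightarrow> nat" where
  "parikh \<sigma> = (\<lambda>t. count_list \<sigma> t)"

definition live :: "('p,'t) pnet \<Rightarrow> ('p \<Rightarrow> nat) \<Rightarrow> bool" where
  "live N M0 \<longleftrightarrow> (\<forall>t \<in> transs N. \<forall>M' \<in> reach N M0. \<exists>M'' \<in> reach N M'. enabled N M'' t)"

definition deadlockable :: "('p,'t) pnet \<Rightarrow> ('p \<Rightarrow> nat) \<Rightarrow> bool" where
  "deadlockable N M0 \<longleftrightarrow> (\<exists>M \<in> reach N M0. \<forall>t \<in> transs N. \<not> enabled N M t)"

definition shared :: "('p,'t) pnet \<Rightarrow> 'p \<Rightarrow> bool" where
  "shared N p \<longleftrightarrow> p \<in> places N \<and> card (postP N p) \<ge> 2"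

definition sharedPlaces :: "('p,'t) pnet \<Rightarrow> 'p set" where
  "sharedPlaces N = {p. shared N p}"

definition oneS :: "('p,'t) pnet \<Rightarrow> bool" where
  "oneS N \<longleftrightarrow> card (sharedPlaces N) \<le> 1"

definition homogeneous :: "('p,'t) pnet \<Rightarrow> bool" where
  "homogeneous N \<longleftrightarrow>
     (\<forall>p \<in> places N. \<forall>t \<in> postP N p. \<forall>t' \<in> postP N p. pre N p t = pre N p t')"

definition delete_places :: "('p,'t) pnet \<Rightarrow> 'p set \<Rightarrow> ('p,'t) pnet" where
  "delete_places N S = N\<lparr> places := places N - S,
                          pre := (\<lambda>p t. if p \<in> S then 0 else pre N p t),
                          post := (\<lambda>t p. if p \<in> S then 0 else post N t p) \<rparr>"

definition WMG_le :: "('p,'t) pnet \<Rightarrow> bool" where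
  "WMG_le N \<longleftrightarrow> (\<forall>p \<in> places N. card (preP N p) \<le> 1 \<and> card (postP N p) \<le> 1)"

definition shared_deletion :: "('p,'t) pnet \<Rightarrow> ('p,'t) pnet" where
  "shared_deletion N = delete_places N (sharedPlaces N)"

definition H1S_WMG_le :: "('p,'t) pnet \<Rightarrow> bool" where
  "H1S_WMG_le N \<longleftrightarrow> homogeneous N \<and> oneS N \<and> WMG_le (shared_deletion N)"

definition arcs :: "('p,'t) pnet \<Rightarrow> (('p + 't) \<times> ('p + 't)) set" where
  "arcs N = {(Inl p, Inr t) | p t. pre N p t > 0} \<union> {(Inr t, Inl p) | t p. post N t p > 0}"

definition nodes :: "('p,'t) pnet \<Rightarrow> ('p + 't) set" where
  "nodes N = Inl ` places N \<union> Inr ` transs N"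

definition strongly_connected :: "('p,'t) pnet \<Rightarrow> bool" where
  "strongly_connected N \<longleftrightarrow> (\<forall>x \<in> nodes N. \<forall>y \<in> nodes N. (x, y) \<in> (arcs N)\<^sup>*)"

text \<open>The structural bound SB(p,S) is finite iff the set of values M(p), M in N^P with
  M = M0 + I Y for some Y in N^T, is bounded.\<close>
definition struct_bounded :: "('p,'t) pnet \<Rightarrow> ('p \<Rightarrow> nat) \<Rightarrow> 'p \<Rightarrow> bool" where
  "struct_bounded N M0 p \<longleftrightarrow>
     (\<exists>b::nat. \<forall>(M :: 'p \<Rightarrow> nat) (Y :: 't \<Rightarrow> nat).
        (\<forall>q \<in> places N. int (M q) = int (M0 q) + (\<Sum>t \<in> transs N. inc N q t * int (Y t)))
        \<longrightarrow> M p \<le> b)"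

datatype ('p,'t) tplace = Old 'p | PA 'p 't | PB 'p 't
datatype ('p,'t) ttrans = OldT 't | TP 'p 't

definition thpairs :: "('p,'t) pnet \<Rightarrow> ('p \<times> 't) set" where
  "thpairs N = {(p,t). p \<in> places N \<and> t \<in> transs N \<and> postP N p = {t} \<and> card (preT N t) \<ge> 2}"

definition Theta :: "('p,'t) pnet \<Rightarrow> (('p,'t) tplace, ('p,'t) ttrans) pnet" where
  "Theta N = \<lparr>
     places = Old ` places N \<union> (\<lambda>(p,t). PA p t) ` thpairs N \<union> (\<lambda>(p,t). PB p t) ` thpairs N,
     transs = OldT ` transs N \<union> (\<lambda>(p,t). TP p t) ` thpairs N,
     pre = (\<lambda>x y. case (x, y) of
              (Old p, OldT t) \<Rightarrow> (if (p,t) \<in> thpairs N then 0 else pre N p t)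
            | (Old p, TP p' t') \<Rightarrow> (if (p',t') \<in> thpairs N \<and> p = p' then pre N p t' else 0)
            | (PA p t, OldT t') \<Rightarrow> (if (p,t) \<in> thpairs N \<and> t = t' then 1 else 0)
            | (PB p t, TP p' t') \<Rightarrow> (if (p,t) \<in> thpairs N \<and> p = p' \<and> t = t' then 1 else 0)
            | _ \<Rightarrow> 0),
     post = (\<lambda>y x. case (y, x) of
              (OldT t, Old p) \<Rightarrow> post N t p
            | (OldT t, PB p' t') \<Rightarrow> (if (p',t') \<in> thpairs N \<and> t = t' then 1 else 0)
            | (TP p t, PA p' t') \<Rightarrow> (if (p,t) \<in> thpairs N \<and> p = p' \<and> t = t' then 1 else 0)
            | _ \<Rightarrow> 0) \<rparr>"

definition Theta_M0 :: "('p \<Rightarrow> nat) \<Rightarrow> ('p,'t) tplace \<Rightarrow> nat" where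
  "Theta_M0 M0 = (\<lambda>x. case x of Old p \<Rightarrow> M0 p | PA p t \<Rightarrow> 0 | PB p t \<Rightarrow> 1)"

definition NewTrans :: "('p,'t) pnet \<Rightarrow> ('p,'t) ttrans set" where
  "NewTrans N = transs (Theta N) - OldT ` transs N"

definition NewTransPre :: "('p,'t) pnet \<Rightarrow> 't \<Rightarrow> ('p,'t) ttrans set" where
  "NewTransPre N t = NewTrans N \<inter> (\<Union>q \<in> preT (Theta N) (OldT t). preP (Theta N) q)"

definition Seq :: "'a set \<Rightarrow> 'a list" where
  "Seq A = (SOME xs. distinct xs \<and> set xs = A)"

fun expand :: "('p,'t) pnet \<Rightarrow> 't list \<Rightarrow> ('p,'t) ttrans list" where
  "expand N [] = []"
| "expand N (t # \<alpha>) = Seq (NewTransPre N t) @ [OldT t] @ expand N \<alpha>"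

definition target :: "('p,'t) pnet \<Rightarrow> ('p,'t) ttrans \<Rightarrow> ('p,'t) ttrans" where
  "target N u = (THE v. {v} = (\<Union>q \<in> postT (Theta N) u. postP (Theta N) q))"

fun reduce :: "('p,'t) pnet \<Rightarrow> ('p,'t) ttrans list \<Rightarrow> ('p,'t) ttrans list" where
  "reduce N [] = []"
| "reduce N (u # \<beta>) =
     (if u \<in> NewTrans N \<and> target N u \<notin> set \<beta> then reduce N \<beta> else u # reduce N \<beta>)"

end

theory Submission
  imports Defs
begin

text \<open>
  The new transition TP p t of a pair (p,t) moves the W(p,t) tokens that t needs from p into the
  buffer place PA p t ahead of time, and the complementary place PB p t allows at most one such
  move per firing of t; hence M(PA p t) + M(PB p t) = 1 on all reachable markings.
  Collapsing a marking of the transformed net, i.e. putting the buffered tokens back on p, maps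
  every run of the transformed net to a run of N consisting of its old transitions.  Conversely,
  every firing of t in N is reproduced by first firing the pending moves into t and then t itself.
  This two-way simulation transfers feasibility, deadlocks and liveness.  Collapsing is also
  compatible with the state equation, which transfers structural bounds.  The structural classes
  are preserved because the new places have one input and one output each and the places p of
  the pairs keep a single output transition, TP p t.
\<close>

lemma enabled_iff_pre_le:
  assumes "wf_net N"
  shows "enabled N M t \<longleftrightarrow> (\<forall>p. pre N p t \<le> M p)"
  using assms unfolding enabled_def wf_net_def by (metis le0 neq0_conv)

lemma fire_enabled:
  assumes "wf_net N" and "enabled N M t"
  shows "fire N M t = (\<lambda>p. M p - pre N p t + post N t p)"
  using assms unfolding fire_def inc_def by (intro ext) (auto simp: enabled_iff_pre_le)

lemma run_append:
  "run N M (xs @ ys) = (case run N M xs of None \<Rightarrow> None | Some M' \<Rightarrow> run N M' ys)"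
  by (induction xs arbitrary: M) auto

lemma run_append_Some:
  "run N M xs = Some M' \<Longrightarrow> run N M' ys = Some M'' \<Longrightarrow> run N M (xs @ ys) = Some M''"
  by (simp add: run_append)

lemma run_Some_reach: "run N M \<sigma> = Some M' \<Longrightarrow> M' \<in> reach N M"
  unfolding reach_def by blast

lemma reach_trans: "M1 \<in> reach N M \<Longrightarrow> M2 \<in> reach N M1 \<Longrightarrow> M2 \<in> reach N M"
  unfolding reach_def using run_append_Some by blast

lemma set_run_subset_transs: "run N M \<sigma> \<noteq> None \<Longrightarrow> set \<sigma> \<subseteq> transs N"
  by (induction \<sigma> arbitrary: M) (auto split: if_splits)

lemma distinct_set_Seq: "finite A \<Longrightarrow> distinct (Seq A) \<and> set (Seq A) = A"
  unfolding Seq_def by (rule someI_ex) (metis finite_distinct_list)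

lemma count_list_distinct:
  "distinct xs \<Longrightarrow> count_list xs x = (if x \<in> set xs then 1 else 0)"
  by (induction xs) auto

lemma tplace_forall_iff:
  "(\<forall>x. P x) \<longleftrightarrow> (\<forall>p. P (Old p)) \<and> (\<forall>p t. P (PA p t)) \<and> (\<forall>p t. P (PB p t))"
  by (auto intro: tplace.induct)

lemma ttrans_forall_iff: "(\<forall>u. P u) \<longleftrightarrow> (\<forall>t. P (OldT t)) \<and> (\<forall>p t. P (TP p t))"
  by (auto intro: ttrans.induct)

lemma card_image_OldT: "card (OldT ` A) = card A"
  by (rule card_image) (simp add: inj_on_def)

lemma pre_Theta [simp]:
  "pre (Theta N) (Old p) (OldT t) = (if (p,t) \<in> thpairs N then 0 else pre N p t)"
  "pre (Theta N) (Old p) (TP p' t') = (if (p',t') \<in> thpairs N \<and> p = p' then pre N p t' else 0)"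
  "pre (Theta N) (PA p t) (OldT t') = (if (p,t) \<in> thpairs N \<and> t = t' then 1 else 0)"
  "pre (Theta N) (PA p t) (TP p' t') = 0"
  "pre (Theta N) (PB p t) (OldT t') = 0"
  "pre (Theta N) (PB p t) (TP p' t') = (if (p,t) \<in> thpairs N \<and> p = p' \<and> t = t' then 1 else 0)"
  by (simp_all add: Theta_def)

lemma post_Theta [simp]:
  "post (Theta N) (OldT t) (Old p) = post N t p"
  "post (Theta N) (OldT t) (PA p' t') = 0"
  "post (Theta N) (OldT t) (PB p' t') = (if (p',t') \<in> thpairs N \<and> t = t' then 1 else 0)"
  "post (Theta N) (TP p t) (Old p') = 0"
  "post (Theta N) (TP p t) (PA p' t') = (if (p,t) \<in> thpairs N \<and> p = p' \<and> t = t' then 1 else 0)"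
  "post (Theta N) (TP p t) (PB p' t') = 0"
  by (simp_all add: Theta_def)

lemma places_Theta:
  "places (Theta N) =
     Old ` places N \<union> (\<lambda>(p,t). PA p t) ` thpairs N \<union> (\<lambda>(p,t). PB p t) ` thpairs N"
  by (simp add: Theta_def)

lemma transs_Theta: "transs (Theta N) = OldT ` transs N \<union> (\<lambda>(p,t). TP p t) ` thpairs N"
  by (simp add: Theta_def)

lemma mem_places_Theta [simp]:
  "Old p \<in> places (Theta N) \<longleftrightarrow> p \<in> places N"
  "PA p t \<in> places (Theta N) \<longleftrightarrow> (p,t) \<in> thpairs N"
  "PB p t \<in> places (Theta N) \<longleftrightarrow> (p,t) \<in> thpairs N"
  by (auto simp: places_Theta)

lemma mem_transs_Theta [simp]:
  "OldT t \<in> transs (Theta N) \<longleftrightarrow> t \<in> transs N"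
  "TP p t \<in> transs (Theta N) \<longleftrightarrow> (p,t) \<in> thpairs N"
  by (auto simp: transs_Theta)

lemma postP_thpair: "(p,t) \<in> thpairs N \<Longrightarrow> postP N p = {t}"
  by (simp add: thpairs_def)

lemma thpairs_unique: "(p,t) \<in> thpairs N \<Longrightarrow> (p,t') \<in> thpairs N \<Longrightarrow> t' = t"
  by (simp add: thpairs_def)

lemma preP_Theta_Old: "preP (Theta N) (Old p) = OldT ` preP N p"
  by (auto simp: preP_def set_eq_iff ttrans_forall_iff)

lemma postP_Theta_Old: "\<forall>t. (p,t) \<notin> thpairs N \<Longrightarrow> postP (Theta N) (Old p) = OldT ` postP N p"
  by (auto simp: postP_def set_eq_iff ttrans_forall_iff)

lemma preP_Theta_PA: "(p,t) \<in> thpairs N \<Longrightarrow> preP (Theta N) (PA p t) = {TP p t}"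
  by (auto simp: preP_def set_eq_iff ttrans_forall_iff)

lemma postP_Theta_PB: "(p,t) \<in> thpairs N \<Longrightarrow> postP (Theta N) (PB p t) = {TP p t}"
  by (auto simp: postP_def set_eq_iff ttrans_forall_iff)

lemma postT_Theta_TP: "(p,t) \<in> thpairs N \<Longrightarrow> postT (Theta N) (TP p t) = {PA p t}"
  by (auto simp: postT_def set_eq_iff tplace_forall_iff)

lemma NewTrans_eq: "NewTrans N = (\<lambda>(p,t). TP p t) ` thpairs N"
  by (auto simp: NewTrans_def transs_Theta)

locale wf_pnet =
  fixes N :: "('p,'t) pnet"
  assumes wf: "wf_net N"
begin

lemma thpairsD:
  assumes "(p,t) \<in> thpairs N"
  shows "p \<in> places N" and "t \<in> transs N" and "pre N p t > 0"
    and "t' \<noteq> t \<Longrightarrow> pre N p t' = 0"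
  using assms wf unfolding thpairs_def postP_def wf_net_def by auto

lemma thpairs_cases [case_names thpair other_thpair no_thpair]:
  obtains "(q,t) \<in> thpairs N"
    | t' where "(q,t') \<in> thpairs N" and "(q,t) \<notin> thpairs N" and "pre N q t = 0"
    | "\<forall>t'. (q,t') \<notin> thpairs N"
  by (metis thpairsD(4))

lemma finite_thpairs: "finite (thpairs N)"
proof -
  have "thpairs N \<subseteq> places N \<times> transs N" by (auto simp: thpairs_def)
  with wf show ?thesis unfolding wf_net_def by (meson finite_SigmaI finite_subset)
qed

lemma finite_thpairs_with: "finite {p. (p,t) \<in> thpairs N \<and> P p}"
  by (rule finite_subset[OF _ finite_imageI[OF finite_thpairs, of fst]]) force

lemma wf_Theta: "wf_net (Theta N)"
proof -
  have "finite (places N)" "finite (transs N)" using wf by (auto simp: wf_net_def)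
  then have "finite (places (Theta N))" "finite (transs (Theta N))"
    by (auto simp: places_Theta transs_Theta finite_thpairs)
  moreover have "x \<in> places (Theta N) \<and> u \<in> transs (Theta N)"
    if "pre (Theta N) x u > 0" for x u
    using that wf thpairsD unfolding wf_net_def by (cases x; cases u; auto split: if_splits)
  moreover have "x \<in> places (Theta N) \<and> u \<in> transs (Theta N)"
    if "post (Theta N) u x > 0" for x u
    using that wf thpairsD unfolding wf_net_def by (cases x; cases u; auto split: if_splits)
  ultimately show ?thesis unfolding wf_net_def by blast
qed

lemma postP_Theta_Old_thpair: "(p,t) \<in> thpairs N \<Longrightarrow> postP (Theta N) (Old p) = {TP p t}"
  using thpairsD[of p t] by (auto simp: postP_def set_eq_iff ttrans_forall_iff dest: thpairs_unique)
    (metis thpairsD(4))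

lemma postP_Theta_PA: "(p,t) \<in> thpairs N \<Longrightarrow> postP (Theta N) (PA p t) = {OldT t}"
  using thpairsD(2) by (auto simp: postP_def set_eq_iff ttrans_forall_iff)

lemma preP_Theta_PB: "(p,t) \<in> thpairs N \<Longrightarrow> preP (Theta N) (PB p t) = {OldT t}"
  using thpairsD(2) by (auto simp: preP_def set_eq_iff ttrans_forall_iff)

lemma NewTransPre_eq: "NewTransPre N t = (\<lambda>q. TP q t) ` {q. (q,t) \<in> thpairs N}"
proof (intro set_eqI iffI)
  fix u
  assume "u \<in> NewTransPre N t"
  then obtain p t' x where u: "u = TP p t'" "(p,t') \<in> thpairs N"
    and x: "x \<in> preT (Theta N) (OldT t)" "u \<in> preP (Theta N) x"
    unfolding NewTransPre_def NewTrans_eq by auto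
  have "x = PA p t'" using x(2) u by (cases x) (auto simp: preP_def split: if_splits)
  then have "t' = t" using x(1) by (auto simp: preT_def split: if_splits)
  with u show "u \<in> (\<lambda>q. TP q t) ` {q. (q,t) \<in> thpairs N}" by auto
next
  fix u
  assume "u \<in> (\<lambda>q. TP q t) ` {q. (q,t) \<in> thpairs N}"
  then obtain q where u: "u = TP q t" "(q,t) \<in> thpairs N" by auto
  then have "PA q t \<in> preT (Theta N) (OldT t)" "u \<in> preP (Theta N) (PA q t)"
    by (auto simp: preT_def preP_Theta_PA)
  with u show "u \<in> NewTransPre N t" unfolding NewTransPre_def NewTrans_eq by blast
qed

lemma target_TP: "(p,t) \<in> thpairs N \<Longrightarrow> target N (TP p t) = OldT t"
  by (simp add: target_def postT_Theta_TP postP_Theta_PA)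

lemma Seq_NewTransPre:
  "distinct (Seq (NewTransPre N t)) \<and>
   set (Seq (NewTransPre N t)) = (\<lambda>q. TP q t) ` {q. (q,t) \<in> thpairs N}"
  using distinct_set_Seq[of "NewTransPre N t"] finite_thpairs_with[of t "\<lambda>_. True"]
  by (simp add: NewTransPre_eq)

end

section \<open>Structural properties\<close>

lemma preP_delete_places: "preP (delete_places N S) x = (if x \<in> S then {} else preP N x)"
  by (auto simp: preP_def delete_places_def)

lemma postP_delete_places: "postP (delete_places N S) x = (if x \<in> S then {} else postP N x)"
  by (auto simp: postP_def delete_places_def)

lemma places_delete_places: "places (delete_places N S) = places N - S"
  by (simp add: delete_places_def)

lemma delete_places_empty: "delete_places N {} = N"
  by (simp add: delete_places_def)

lemma arcs_delete_places_pre: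
  "(Inl x, Inr u) \<in> arcs (delete_places N S) \<longleftrightarrow> x \<notin> S \<and> pre N x u > 0"
  by (auto simp: arcs_def delete_places_def)

lemma arcs_delete_places_post:
  "(Inr u, Inl x) \<in> arcs (delete_places N S) \<longleftrightarrow> x \<notin> S \<and> post N u x > 0"
  by (auto simp: arcs_def delete_places_def)

lemma arcs_delete_places_cases:
  assumes "(a, b) \<in> arcs (delete_places N S)"
  obtains x u where "a = Inl x" "b = Inr u" "x \<notin> S" "pre N x u > 0"
    | x u where "a = Inr u" "b = Inl x" "x \<notin> S" "post N u x > 0"
  using assms by (auto simp: arcs_def delete_places_def split: if_splits)

lemma nodes_delete_places: "nodes (delete_places N S) = Inl ` (places N - S) \<union> Inr ` transs N"
  by (simp add: nodes_def delete_places_def)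

context wf_pnet
begin

lemma shared_Theta_iff: "shared (Theta N) x \<longleftrightarrow> (\<exists>p. x = Old p \<and> shared N p)"
proof (cases x)
  case (Old p)
  show ?thesis
  proof (cases "\<exists>t. (p,t) \<in> thpairs N")
    case True
    then obtain t where pt: "(p,t) \<in> thpairs N" by blast
    show ?thesis using Old postP_Theta_Old_thpair[OF pt] postP_thpair[OF pt]
      by (simp add: shared_def)
  next
    case False
    then have "postP (Theta N) (Old p) = OldT ` postP N p" by (simp add: postP_Theta_Old)
    then show ?thesis by (simp add: shared_def Old card_image_OldT)
  qed
next
  case (PA p t)
  then show ?thesis by (cases "(p,t) \<in> thpairs N") (auto simp: shared_def postP_Theta_PA)
next
  case (PB p t)
  then show ?thesis by (cases "(p,t) \<in> thpairs N") (auto simp: shared_def postP_Theta_PB)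
qed

lemma sharedPlaces_Theta: "sharedPlaces (Theta N) = Old ` sharedPlaces N"
  unfolding sharedPlaces_def using shared_Theta_iff by auto

lemma oneS_Theta: "oneS N \<Longrightarrow> oneS (Theta N)"
  by (simp add: oneS_def sharedPlaces_Theta card_image inj_on_def)

lemma homogeneous_Theta: "homogeneous N \<Longrightarrow> homogeneous (Theta N)"
  unfolding homogeneous_def
proof (intro ballI)
  fix x u u'
  assume hom: "\<forall>p\<in>places N. \<forall>t\<in>postP N p. \<forall>t'\<in>postP N p. pre N p t = pre N p t'"
    and x: "x \<in> places (Theta N)" and u: "u \<in> postP (Theta N) x" and u': "u' \<in> postP (Theta N) x"
  show "pre (Theta N) x u = pre (Theta N) x u'"
  proof (cases x)
    case (Old p)
    show ?thesis
    proof (cases "\<exists>t. (p,t) \<in> thpairs N")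
      case True
      then obtain t where "(p,t) \<in> thpairs N" by blast
      with u u' Old show ?thesis by (simp add: postP_Theta_Old_thpair)
    next
      case False
      then have "postP (Theta N) (Old p) = OldT ` postP N p" by (simp add: postP_Theta_Old)
      with u u' Old obtain t t' where tt: "u = OldT t" "u' = OldT t'"
          "t \<in> postP N p" "t' \<in> postP N p"
        by blast
      moreover have "p \<in> places N" using x Old by simp
      ultimately have "pre N p t = pre N p t'" using hom by blast
      with tt Old False show ?thesis by auto
    qed
  next
    case (PA p t)
    with x u u' show ?thesis by (simp add: postP_Theta_PA)
  next
    case (PB p t)
    with x u u' show ?thesis by (simp add: postP_Theta_PB)
  qed
qed

lemma WMG_le_shared_deletion_Theta:
  assumes "WMG_le (shared_deletion N)"
  shows "WMG_le (shared_deletion (Theta N))"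
  unfolding WMG_le_def shared_deletion_def
proof (intro ballI)
  fix x
  assume x: "x \<in> places (delete_places (Theta N) (sharedPlaces (Theta N)))"
  show "card (preP (delete_places (Theta N) (sharedPlaces (Theta N))) x) \<le> 1 \<and>
        card (postP (delete_places (Theta N) (sharedPlaces (Theta N))) x) \<le> 1"
  proof (cases x)
    case (Old p)
    with x have p: "p \<in> places N - sharedPlaces N"
      by (auto simp: places_delete_places sharedPlaces_Theta)
    with assms have "card (preP N p) \<le> 1" "card (postP N p) \<le> 1"
      by (auto simp: WMG_le_def shared_deletion_def places_delete_places
          preP_delete_places postP_delete_places)
    with p Old show ?thesis
      by (cases "\<exists>t. (p,t) \<in> thpairs N")
        (auto simp: preP_delete_places postP_delete_places sharedPlaces_Theta preP_Theta_Old
          postP_Theta_Old postP_Theta_Old_thpair card_image_OldT)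
  next
    case (PA p t)
    with x show ?thesis
      by (auto simp: preP_delete_places postP_delete_places places_delete_places preP_Theta_PA
          postP_Theta_PA)
  next
    case (PB p t)
    with x show ?thesis
      by (auto simp: preP_delete_places postP_delete_places places_delete_places preP_Theta_PB
          postP_Theta_PB)
  qed
qed

lemma H1S_WMG_le_Theta: "H1S_WMG_le N \<Longrightarrow> H1S_WMG_le (Theta N)"
  unfolding H1S_WMG_le_def using homogeneous_Theta oneS_Theta WMG_le_shared_deletion_Theta by blast

end

lemma arcs_Theta_thpair:
  assumes "(p,t) \<in> thpairs N"
  shows "(Inr (OldT t), Inl (PB p t)) \<in> arcs (delete_places (Theta N) (Old ` S))"
    and "(Inl (PB p t), Inr (TP p t)) \<in> arcs (delete_places (Theta N) (Old ` S))"
    and "(Inr (TP p t), Inl (PA p t)) \<in> arcs (delete_places (Theta N) (Old ` S))"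
    and "(Inl (PA p t), Inr (OldT t)) \<in> arcs (delete_places (Theta N) (Old ` S))"
  using assms by (auto simp: arcs_delete_places_pre arcs_delete_places_post)

lemma rtrancl_arcs_Theta_thpair:
  assumes pt: "(p,t) \<in> thpairs N" and x: "x \<in> {Inl (PB p t), Inr (TP p t), Inl (PA p t)}"
  shows "(Inr (OldT t), x) \<in> (arcs (delete_places (Theta N) (Old ` S)))\<^sup>*"
    and "(x, Inr (OldT t)) \<in> (arcs (delete_places (Theta N) (Old ` S)))\<^sup>*"
proof -
  let ?R = "arcs (delete_places (Theta N) (Old ` S))"
  note cycle = arcs_Theta_thpair[OF pt, of S]
  have "(Inr (OldT t), Inl (PB p t)) \<in> ?R\<^sup>*" "(Inr (OldT t), Inr (TP p t)) \<in> ?R\<^sup>*"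
    "(Inr (OldT t), Inl (PA p t)) \<in> ?R\<^sup>*"
    using r_into_rtrancl[OF cycle(1)] rtrancl_into_rtrancl[OF _ cycle(2)]
      rtrancl_into_rtrancl[OF _ cycle(3)] by blast+
  with x show "(Inr (OldT t), x) \<in> ?R\<^sup>*" by blast
  have "(Inl (PA p t), Inr (OldT t)) \<in> ?R\<^sup>*" "(Inr (TP p t), Inr (OldT t)) \<in> ?R\<^sup>*"
    "(Inl (PB p t), Inr (OldT t)) \<in> ?R\<^sup>*"
    using r_into_rtrancl[OF cycle(4)] converse_rtrancl_into_rtrancl[OF cycle(3)]
      converse_rtrancl_into_rtrancl[OF cycle(2)] by blast+
  with x show "(x, Inr (OldT t)) \<in> ?R\<^sup>*" by blast
qed

lemma rtrancl_arcs_Theta_lift: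
  assumes "(a, b) \<in> (arcs (delete_places N S))\<^sup>*"
  shows "(map_sum Old OldT a, map_sum Old OldT b) \<in> (arcs (delete_places (Theta N) (Old ` S)))\<^sup>*"
  using assms
proof (induction rule: rtrancl_induct)
  case (step b c)
  let ?R = "arcs (delete_places (Theta N) (Old ` S))"
  have "(map_sum Old OldT b, map_sum Old OldT c) \<in> ?R\<^sup>*"
    using step.hyps(2)
  proof (cases rule: arcs_delete_places_cases)
    case (1 p t)
    show ?thesis
    proof (cases "(p,t) \<in> thpairs N")
      case True
      with 1 have "(Inl (Old p), Inr (TP p t)) \<in> ?R" by (auto simp: arcs_delete_places_pre)
      with rtrancl_arcs_Theta_thpair(2)[OF True, of "Inr (TP p t)" S] 1 show ?thesis
        by (simp add: converse_rtrancl_into_rtrancl)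
    next
      case False
      with 1 have "(Inl (Old p), Inr (OldT t)) \<in> ?R" by (auto simp: arcs_delete_places_pre)
      with 1 show ?thesis by auto
    qed
  next
    case (2 p t)
    then have "(Inr (OldT t), Inl (Old p)) \<in> ?R" by (auto simp: arcs_delete_places_post)
    with 2 show ?thesis by auto
  qed
  with step.IH show ?case by (rule rtrancl_trans)
qed simp

context wf_pnet
begin

lemma nodes_Theta_reach_old:
  assumes "x \<in> nodes (delete_places (Theta N) (Old ` S))"
  shows "\<exists>y \<in> nodes (delete_places N S).
    (x, map_sum Old OldT y) \<in> (arcs (delete_places (Theta N) (Old ` S)))\<^sup>* \<and>
    (map_sum Old OldT y, x) \<in> (arcs (delete_places (Theta N) (Old ` S)))\<^sup>*"
proof -
  from assms consider (place) p where "x = Inl (Old p)" "p \<in> places N" "p \<notin> S"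
    | (trans) t where "x = Inr (OldT t)" "t \<in> transs N"
    | (new) p t where "x \<in> {Inl (PB p t), Inr (TP p t), Inl (PA p t)}" "(p,t) \<in> thpairs N"
    unfolding nodes_delete_places places_Theta transs_Theta by (auto simp: image_iff)
  then show ?thesis
  proof cases
    case place
    then show ?thesis by (intro bexI[of _ "Inl p"]) (auto simp: nodes_delete_places)
  next
    case trans
    then show ?thesis by (intro bexI[of _ "Inr t"]) (auto simp: nodes_delete_places)
  next
    case new
    then show ?thesis using rtrancl_arcs_Theta_thpair[OF new(2) new(1)] thpairsD(2)[OF new(2)]
      by (intro bexI[of _ "Inr t"]) (auto simp: nodes_delete_places)
  qed
qed

lemma strongly_connected_delete_places_Theta:
  assumes sc: "strongly_connected (delete_places N S)"
  shows "strongly_connected (delete_places (Theta N) (Old ` S))"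
  unfolding strongly_connected_def
proof (intro ballI)
  fix x y
  assume "x \<in> nodes (delete_places (Theta N) (Old ` S))"
    and "y \<in> nodes (delete_places (Theta N) (Old ` S))"
  then obtain x' y' where x': "x' \<in> nodes (delete_places N S)"
      "(x, map_sum Old OldT x') \<in> (arcs (delete_places (Theta N) (Old ` S)))\<^sup>*"
    and y': "y' \<in> nodes (delete_places N S)"
      "(map_sum Old OldT y', y) \<in> (arcs (delete_places (Theta N) (Old ` S)))\<^sup>*"
    using nodes_Theta_reach_old by meson
  from sc x'(1) y'(1) have "(x', y') \<in> (arcs (delete_places N S))\<^sup>*"
    unfolding strongly_connected_def by blast
  from rtrancl_arcs_Theta_lift[OF this] x'(2) y'(2)
  show "(x, y) \<in> (arcs (delete_places (Theta N) (Old ` S)))\<^sup>*" by (meson rtrancl_trans)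
qed

lemma strongly_connected_Theta: "strongly_connected N \<Longrightarrow> strongly_connected (Theta N)"
  using strongly_connected_delete_places_Theta[of "{}"] by (simp add: delete_places_empty)

lemma strongly_connected_shared_deletion_Theta:
  "strongly_connected (shared_deletion N) \<Longrightarrow> strongly_connected (shared_deletion (Theta N))"
  unfolding shared_deletion_def sharedPlaces_Theta by (rule strongly_connected_delete_places_Theta)

end

section \<open>Markings of the transformed net\<close>

definition theta_invariant :: "('p,'t) pnet \<Rightarrow> (('p,'t) tplace \<Rightarrow> nat) \<Rightarrow> bool" where
  "theta_invariant N M \<longleftrightarrow> (\<forall>p t. (p,t) \<in> thpairs N \<longrightarrow> M (PA p t) + M (PB p t) = 1)"

text \<open>
  A token on PA p t stands for the W(p,t) tokens that TP p t has already taken from p for the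
  next firing of t; collapsing returns them to p.  The sum has at most one summand.
\<close>
definition collapse :: "('p,'t) pnet \<Rightarrow> (('p,'t) tplace \<Rightarrow> nat) \<Rightarrow> 'p \<Rightarrow> nat" where
  "collapse N M p = M (Old p) + (\<Sum>t | (p,t) \<in> thpairs N. M (PA p t) * pre N p t)"

fun project_old :: "('p,'t) ttrans list \<Rightarrow> 't list" where
  "project_old [] = []"
| "project_old (OldT t # us) = t # project_old us"
| "project_old (TP _ _ # us) = project_old us"

lemma count_project_old: "count_list (project_old us) t = count_list us (OldT t)"
  by (induction us rule: project_old.induct) auto

lemma theta_invariantD:
  "theta_invariant N M \<Longrightarrow> (p,t) \<in> thpairs N \<Longrightarrow> M (PA p t) + M (PB p t) = 1"
  by (simp add: theta_invariant_def)

lemma theta_invariant_PB: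
  assumes "theta_invariant N M" and "(p,t) \<in> thpairs N" and "1 \<le> M (PB p t)"
  shows "M (PA p t) = 0" and "M (PB p t) = 1"
  using theta_invariantD[OF assms(1,2)] assms(3) by linarith+

lemma theta_invariant_PA:
  assumes "theta_invariant N M" and "(p,t) \<in> thpairs N" and "1 \<le> M (PA p t)"
  shows "M (PA p t) = 1" and "M (PB p t) = 0"
  using theta_invariantD[OF assms(1,2)] assms(3) by linarith+

lemma collapse_thpair:
  assumes "(p,t) \<in> thpairs N"
  shows "collapse N M p = M (Old p) + M (PA p t) * pre N p t"
proof -
  have "{t'. (p,t') \<in> thpairs N} = {t}" using assms by (auto dest: thpairs_unique)
  then show ?thesis by (simp add: collapse_def)
qed

lemma collapse_no_thpair: "\<forall>t. (p,t) \<notin> thpairs N \<Longrightarrow> collapse N M p = M (Old p)"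
  by (simp add: collapse_def)

lemma Theta_M0_simps [simp]:
  "Theta_M0 M (Old p) = M p" "Theta_M0 M (PA p t) = 0" "Theta_M0 M (PB p t) = 1"
  by (simp_all add: Theta_M0_def)

lemma theta_invariant_Theta_M0: "theta_invariant N (Theta_M0 M)"
  by (simp add: theta_invariant_def Theta_M0_def)

lemma collapse_Theta_M0: "collapse N (Theta_M0 M) = M"
  by (simp add: fun_eq_iff collapse_def Theta_M0_def)

context wf_pnet
begin

lemma enabled_Theta_iff: "enabled (Theta N) M u \<longleftrightarrow> (\<forall>x. pre (Theta N) x u \<le> M x)"
  using enabled_iff_pre_le[OF wf_Theta] .

lemma fire_Theta:
  "enabled (Theta N) M u \<Longrightarrow> fire (Theta N) M u = (\<lambda>x. M x - pre (Theta N) x u + post (Theta N) u x)"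
  using fire_enabled[OF wf_Theta] .

lemma enabled_TP_iff:
  "(p,t) \<in> thpairs N \<Longrightarrow>
   enabled (Theta N) M (TP p t) \<longleftrightarrow> pre N p t \<le> M (Old p) \<and> 1 \<le> M (PB p t)"
  unfolding enabled_Theta_iff tplace_forall_iff by auto

lemma enabled_OldT_iff:
  "enabled (Theta N) M (OldT t) \<longleftrightarrow>
     (\<forall>q. (q,t) \<notin> thpairs N \<longrightarrow> pre N q t \<le> M (Old q)) \<and>
     (\<forall>q. (q,t) \<in> thpairs N \<longrightarrow> 1 \<le> M (PA q t))"
  unfolding enabled_Theta_iff tplace_forall_iff by auto

lemma fire_TP:
  assumes inv: "theta_invariant N M" and pt: "(p,t) \<in> thpairs N"
    and en: "enabled (Theta N) M (TP p t)"
  shows "fire (Theta N) M (TP p t) = M(Old p := M (Old p) - pre N p t, PA p t := 1, PB p t := 0)"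
proof -
  have "M (PA p t) = 0" "M (PB p t) = 1"
    using theta_invariant_PB[OF inv pt] en pt by (auto simp: enabled_TP_iff)
  with pt show ?thesis by (auto simp: fire_Theta[OF en] fun_eq_iff tplace_forall_iff)
qed

lemma fire_OldT:
  assumes inv: "theta_invariant N M" and en: "enabled (Theta N) M (OldT t)"
  shows "fire (Theta N) M (OldT t) = (\<lambda>x. case x of
      Old q \<Rightarrow> M x - (if (q,t) \<in> thpairs N then 0 else pre N q t) + post N t q
    | PA q t' \<Rightarrow> if (q,t') \<in> thpairs N \<and> t' = t then 0 else M x
    | PB q t' \<Rightarrow> if (q,t') \<in> thpairs N \<and> t' = t then 1 else M x)"
proof -
  have "M (PA q t) = 1" "M (PB q t) = 0" if "(q,t) \<in> thpairs N" for q
    using theta_invariant_PA[OF inv that] en that by (auto simp: enabled_OldT_iff)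
  then show ?thesis by (auto simp: fire_Theta[OF en] fun_eq_iff split: tplace.split)
qed

lemma theta_invariant_fire:
  assumes "theta_invariant N M" and "u \<in> transs (Theta N)" and "enabled (Theta N) M u"
  shows "theta_invariant N (fire (Theta N) M u)"
  using assms by (cases u) (auto simp: fire_TP fire_OldT theta_invariant_def)

lemma collapse_fire_TP:
  assumes inv: "theta_invariant N M" and pt: "(p,t) \<in> thpairs N"
    and en: "enabled (Theta N) M (TP p t)"
  shows "collapse N (fire (Theta N) M (TP p t)) = collapse N M"
proof
  fix q
  have pending: "M (PA p t) = 0" "pre N p t \<le> M (Old p)"
    using theta_invariant_PB[OF inv pt] en pt by (auto simp: enabled_TP_iff)
  consider "q = p" | t' where "q \<noteq> p" "(q,t') \<in> thpairs N" | "\<forall>t'. (q,t') \<notin> thpairs N"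
    by blast
  then show "collapse N (fire (Theta N) M (TP p t)) q = collapse N M q"
  proof cases
    case 1
    with pt pending show ?thesis by (simp add: fire_TP[OF inv pt en] collapse_thpair)
  next
    case 2
    then show ?thesis by (simp add: fire_TP[OF inv pt en] collapse_thpair)
  next
    case 3
    with pt show ?thesis by (auto simp: fire_TP[OF inv pt en] collapse_no_thpair)
  qed
qed

lemma enabled_collapse:
  assumes inv: "theta_invariant N M" and en: "enabled (Theta N) M (OldT t)"
  shows "enabled N (collapse N M) t"
  unfolding enabled_iff_pre_le[OF wf]
proof
  fix q
  show "pre N q t \<le> collapse N M q"
  proof (cases q t rule: thpairs_cases)
    case thpair
    then show ?thesis
      using theta_invariant_PA[OF inv thpair] en by (simp add: enabled_OldT_iff collapse_thpair)
  next
    case other_thpair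
    then show ?thesis by simp
  next
    case no_thpair
    then show ?thesis using en by (simp add: enabled_OldT_iff collapse_no_thpair)
  qed
qed

lemma collapse_fire_OldT:
  assumes inv: "theta_invariant N M" and en: "enabled (Theta N) M (OldT t)"
  shows "collapse N (fire (Theta N) M (OldT t)) = fire N (collapse N M) t"
proof
  fix q
  note fire_eqs = fire_OldT[OF inv en] fire_enabled[OF wf enabled_collapse[OF inv en]]
  show "collapse N (fire (Theta N) M (OldT t)) q = fire N (collapse N M) t q"
  proof (cases q t rule: thpairs_cases)
    case thpair
    then show ?thesis
      using theta_invariant_PA[OF inv thpair] en
        by (simp add: fire_eqs enabled_OldT_iff collapse_thpair)
  next
    case (other_thpair t')
    then have "t' \<noteq> t" by blast
    with other_thpair show ?thesis by (simp add: fire_eqs collapse_thpair)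
  next
    case no_thpair
    then show ?thesis by (simp add: fire_eqs collapse_no_thpair)
  qed
qed

lemma run_Theta_invariant:
  "theta_invariant N M \<Longrightarrow> run (Theta N) M us = Some M' \<Longrightarrow> theta_invariant N M'"
proof (induction us arbitrary: M)
  case (Cons u us)
  then have "u \<in> transs (Theta N)" "enabled (Theta N) M u"
    and "run (Theta N) (fire (Theta N) M u) us = Some M'" by (auto split: if_splits)
  with Cons show ?case using theta_invariant_fire by blast
qed simp

lemma run_Theta_collapse:
  "theta_invariant N M \<Longrightarrow> run (Theta N) M us = Some M' \<Longrightarrow>
   run N (collapse N M) (project_old us) = Some (collapse N M')"
proof (induction us arbitrary: M)
  case Nil
  then show ?case by simp
next
  case (Cons u us)
  note inv = Cons.prems(1)
  from Cons.prems have u: "u \<in> transs (Theta N)" "enabled (Theta N) M u"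
    and run: "run (Theta N) (fire (Theta N) M u) us = Some M'" by (auto split: if_splits)
  have IH: "run N (collapse N (fire (Theta N) M u)) (project_old us) = Some (collapse N M')"
    using Cons.IH[OF theta_invariant_fire[OF inv u] run] .
  show ?case
  proof (cases u)
    case (OldT t)
    with u IH show ?thesis by (simp add: enabled_collapse[OF inv] collapse_fire_OldT[OF inv])
  next
    case (TP p t)
    with u IH show ?thesis by (simp add: collapse_fire_TP[OF inv])
  qed
qed

lemma enabled_collapse_cases:
  assumes inv: "theta_invariant N M" and en: "enabled N (collapse N M) t"
  obtains (pending) p where "(p,t) \<in> thpairs N" and "M (PA p t) = 0"
      and "enabled (Theta N) M (TP p t)"
    | (ready) "enabled (Theta N) M (OldT t)"
proof (cases "\<exists>p. (p,t) \<in> thpairs N \<and> M (PA p t) = 0")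
  case True
  then obtain p where p: "(p,t) \<in> thpairs N" "M (PA p t) = 0" by blast
  have "pre N p t \<le> collapse N M p" using en by (simp add: enabled_iff_pre_le[OF wf])
  then have "pre N p t \<le> M (Old p)" using p by (simp add: collapse_thpair)
  moreover have "M (PB p t) = 1" using theta_invariantD[OF inv p(1)] p(2) by simp
  ultimately show ?thesis using pending p by (simp add: enabled_TP_iff)
next
  case False
  have "enabled (Theta N) M (OldT t)"
    unfolding enabled_OldT_iff
  proof (intro conjI allI impI)
    fix q
    assume "(q,t) \<notin> thpairs N"
    moreover have "pre N q t \<le> collapse N M q" using en by (simp add: enabled_iff_pre_le[OF wf])
    ultimately show "pre N q t \<le> M (Old q)"
      by (cases q t rule: thpairs_cases) (auto simp: collapse_no_thpair)
  next
    fix q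
    assume "(q,t) \<in> thpairs N"
    with False show "1 \<le> M (PA q t)" by auto
  qed
  then show ?thesis by (rule ready)
qed

lemma prepare_OldT:
  assumes "theta_invariant N M" and "enabled N (collapse N M) t"
  shows "\<exists>us M'. run (Theta N) M us = Some M' \<and> theta_invariant N M' \<and>
    collapse N M' = collapse N M \<and> enabled (Theta N) M' (OldT t) \<and>
    (\<forall>p t'. t' \<noteq> t \<longrightarrow> M' (PA p t') = M (PA p t'))"
  using assms
proof (induction "card {p. (p,t) \<in> thpairs N \<and> M (PA p t) = 0}" arbitrary: M rule: less_induct)
  case less
  note inv = less.prems(1)
  from less.prems show ?case
  proof (cases rule: enabled_collapse_cases)
    case (pending p)
    let ?M1 = "fire (Theta N) M (TP p t)"
    note M1 = fire_TP[OF inv pending(1,3)]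
    have "{q. (q,t) \<in> thpairs N \<and> ?M1 (PA q t) = 0} \<subset> {q. (q,t) \<in> thpairs N \<and> M (PA q t) = 0}"
      using pending by (auto simp: M1)
    then have "card {q. (q,t) \<in> thpairs N \<and> ?M1 (PA q t) = 0}
        < card {q. (q,t) \<in> thpairs N \<and> M (PA q t) = 0}"
      by (rule psubset_card_mono[OF finite_thpairs_with])
    moreover have "theta_invariant N ?M1"
      using theta_invariant_fire[OF inv _ pending(3)] pending(1) by simp
    moreover have collapse_M1: "collapse N ?M1 = collapse N M"
      using collapse_fire_TP[OF inv pending(1,3)] .
    moreover have "enabled N (collapse N ?M1) t" using collapse_M1 less.prems(2) by simp
    ultimately obtain us M' where "run (Theta N) ?M1 us = Some M'" "theta_invariant N M'"
      "collapse N M' = collapse N M" "enabled (Theta N) M' (OldT t)"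
      "\<forall>q t'. t' \<noteq> t \<longrightarrow> M' (PA q t') = ?M1 (PA q t')"
      using less.hyps collapse_M1 by fastforce
    with pending show ?thesis by (intro exI[of _ "TP p t # us"] exI[of _ M']) (auto simp: M1)
  next
    case ready
    with inv show ?thesis by (intro exI[of _ "[]"] exI[of _ M]) simp
  qed
qed

lemma simulate_fire:
  assumes inv: "theta_invariant N M" and t: "t \<in> transs N" and en: "enabled N (collapse N M) t"
  obtains us M' where "run (Theta N) M us = Some M'" and "theta_invariant N M'"
    and "collapse N M' = fire N (collapse N M) t"
    and "\<forall>p t'. (p,t') \<in> thpairs N \<longrightarrow> M' (PA p t') = (if t' = t then 0 else M (PA p t'))"
proof -
  obtain us M1 where us: "run (Theta N) M us = Some M1" "theta_invariant N M1"
    "collapse N M1 = collapse N M" "enabled (Theta N) M1 (OldT t)"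
    "\<forall>p t'. t' \<noteq> t \<longrightarrow> M1 (PA p t') = M (PA p t')"
    using prepare_OldT[OF inv en] by blast
  let ?M' = "fire (Theta N) M1 (OldT t)"
  have "run (Theta N) M (us @ [OldT t]) = Some ?M'"
    using us t by (simp add: run_append)
  moreover have "theta_invariant N ?M'" using theta_invariant_fire[OF us(2) _ us(4)] t by simp
  moreover have "collapse N ?M' = fire N (collapse N M) t"
    using collapse_fire_OldT[OF us(2,4)] us(3) by simp
  moreover have "\<forall>p t'. (p,t') \<in> thpairs N \<longrightarrow> ?M' (PA p t') = (if t' = t then 0 else M (PA p t'))"
    using us(5) by (simp add: fire_OldT[OF us(2,4)])
  ultimately show ?thesis by (rule that)
qed

lemma simulate_run:
  "theta_invariant N M \<Longrightarrow> run N (collapse N M) \<sigma> = Some M1 \<Longrightarrow>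
   \<exists>us M'. run (Theta N) M us = Some M' \<and> theta_invariant N M' \<and> collapse N M' = M1 \<and>
     (\<forall>p t. (p,t) \<in> thpairs N \<longrightarrow> M (PA p t) = 0 \<longrightarrow> M' (PA p t) = 0)"
proof (induction \<sigma> arbitrary: M)
  case Nil
  then show ?case by (intro exI[of _ "[]"] exI[of _ M]) simp
next
  case (Cons t \<sigma>)
  from Cons.prems have t: "t \<in> transs N" "enabled N (collapse N M) t"
    and run: "run N (fire N (collapse N M) t) \<sigma> = Some M1" by (auto split: if_splits)
  obtain us M2 where us: "run (Theta N) M us = Some M2" "theta_invariant N M2"
    "collapse N M2 = fire N (collapse N M) t"
    "\<forall>p t'. (p,t') \<in> thpairs N \<longrightarrow> M2 (PA p t') = (if t' = t then 0 else M (PA p t'))"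
    using simulate_fire[OF Cons.prems(1) t] .
  obtain vs M' where vs: "run (Theta N) M2 vs = Some M'" "theta_invariant N M'" "collapse N M' = M1"
    "\<forall>p t. (p,t) \<in> thpairs N \<longrightarrow> M2 (PA p t) = 0 \<longrightarrow> M' (PA p t) = 0"
    using Cons.IH[OF us(2)] run us(3) by auto
  have "run (Theta N) M (us @ vs) = Some M'" using us(1) vs(1) by (rule run_append_Some)
  with us vs show ?case by (intro exI[of _ "us @ vs"] exI[of _ M']) auto
qed

lemma reach_dead_Theta:
  assumes "theta_invariant N M" and "\<forall>t \<in> transs N. \<not> enabled N (collapse N M) t"
  shows "\<exists>us M'. run (Theta N) M us = Some M' \<and> (\<forall>u \<in> transs (Theta N). \<not> enabled (Theta N) M' u)"
  using assms
proof (induction "card {(p,t) \<in> thpairs N. M (PA p t) = 0}" arbitrary: M rule: less_induct)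
  case less
  note inv = less.prems(1)
  show ?case
  proof (cases "\<exists>p t. (p,t) \<in> thpairs N \<and> enabled (Theta N) M (TP p t)")
    case True
    then obtain p t where pt: "(p,t) \<in> thpairs N" and en: "enabled (Theta N) M (TP p t)" by blast
    let ?M1 = "fire (Theta N) M (TP p t)"
    note M1 = fire_TP[OF inv pt en]
    have "M (PA p t) = 0" using theta_invariant_PB[OF inv pt] en pt by (simp add: enabled_TP_iff)
    then have "{(q,t') \<in> thpairs N. ?M1 (PA q t') = 0} \<subset> {(q,t') \<in> thpairs N. M (PA q t') = 0}"
      using pt by (auto simp: M1)
    then have "card {(q,t') \<in> thpairs N. ?M1 (PA q t') = 0}
      < card {(q,t') \<in> thpairs N. M (PA q t') = 0}"
      by (rule psubset_card_mono[OF finite_subset[OF _ finite_thpairs], rotated]) blast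
    moreover have "theta_invariant N ?M1" using theta_invariant_fire[OF inv _ en] pt by simp
    moreover have "\<forall>t \<in> transs N. \<not> enabled N (collapse N ?M1) t"
      using less.prems(2) collapse_fire_TP[OF inv pt en] by simp
    ultimately obtain us M' where "run (Theta N) ?M1 us = Some M'"
      "\<forall>u \<in> transs (Theta N). \<not> enabled (Theta N) M' u"
      using less.hyps by blast
    with pt en show ?thesis by (intro exI[of _ "TP p t # us"] exI[of _ M']) simp
  next
    case False
    have "\<not> enabled (Theta N) M u" if "u \<in> transs (Theta N)" for u
      using that False less.prems(2) enabled_collapse[OF inv] by (cases u) auto
    then show ?thesis by (intro exI[of _ "[]"] exI[of _ M]) simp
  qed
qed

end

section \<open>Expanded and reduced sequences\<close>

lemma set_reduce_subset: "set (reduce N us) \<subseteq> set us"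
  by (induction us) auto

context wf_pnet
begin

lemma run_TP_list:
  assumes "theta_invariant N M" and "distinct us" and "set us = (\<lambda>q. TP q t) ` Q"
    and "\<forall>q \<in> Q. (q,t) \<in> thpairs N \<and> pre N q t \<le> M (Old q) \<and> M (PA q t) = 0"
  shows "run (Theta N) M us = Some (\<lambda>x. case x of
      Old q \<Rightarrow> if q \<in> Q then M (Old q) - pre N q t else M (Old q)
    | PA q t' \<Rightarrow> if q \<in> Q \<and> t' = t then 1 else M (PA q t')
    | PB q t' \<Rightarrow> if q \<in> Q \<and> t' = t then 0 else M (PB q t'))"
  using assms
proof (induction us arbitrary: M Q)
  case Nil
  then show ?case by (simp add: fun_eq_iff split: tplace.split)
next
  case (Cons u us)
  then have "u \<in> (\<lambda>q. TP q t) ` Q" by (metis list.set_intros(1))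
  then obtain q where u: "u = TP q t" and q: "q \<in> Q" by blast
  with Cons.prems have pt: "(q,t) \<in> thpairs N" and en: "enabled (Theta N) M (TP q t)"
    using theta_invariantD[OF Cons.prems(1), of q t] by (auto simp: enabled_TP_iff)
  let ?M1 = "fire (Theta N) M (TP q t)"
  have M1: "?M1 = M(Old q := M (Old q) - pre N q t, PA q t := 1, PB q t := 0)"
    using fire_TP[OF Cons.prems(1) pt en] .
  have "set us = (\<lambda>q. TP q t) ` (Q - {q})" using Cons.prems(2,3) u by auto
  moreover have "theta_invariant N ?M1" using theta_invariant_fire[OF Cons.prems(1) _ en] pt by simp
  moreover have "\<forall>q' \<in> Q - {q}. (q',t) \<in> thpairs N \<and> pre N q' t \<le> ?M1 (Old q') \<and> ?M1 (PA q' t) = 0"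
    using Cons.prems(4) by (auto simp: M1)
  ultimately have "run (Theta N) ?M1 us = Some (\<lambda>x. case x of
      Old q' \<Rightarrow> if q' \<in> Q - {q} then ?M1 (Old q') - pre N q' t else ?M1 (Old q')
    | PA q' t' \<Rightarrow> if q' \<in> Q - {q} \<and> t' = t then 1 else ?M1 (PA q' t')
    | PB q' t' \<Rightarrow> if q' \<in> Q - {q} \<and> t' = t then 0 else ?M1 (PB q' t'))"
    using Cons.prems(2) by (intro Cons.IH[of ?M1 "Q - {q}"]) auto
  with en pt q u show ?case by (auto simp: M1 fun_eq_iff split: tplace.split)
qed

lemma run_expand_step:
  assumes t: "t \<in> transs N" and en: "enabled N M t"
  shows "run (Theta N) (Theta_M0 M) (Seq (NewTransPre N t) @ [OldT t])
    = Some (Theta_M0 (fire N M t))"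
proof -
  have pre_le: "pre N q t \<le> M q" for q using en by (simp add: enabled_iff_pre_le[OF wf])
  define M2 :: "('p,'t) tplace \<Rightarrow> nat" where "M2 = (\<lambda>x. case x of
      Old q \<Rightarrow> if (q,t) \<in> thpairs N then M q - pre N q t else M q
    | PA q t' \<Rightarrow> if (q,t) \<in> thpairs N \<and> t' = t then 1 else 0
    | PB q t' \<Rightarrow> if (q,t) \<in> thpairs N \<and> t' = t then 0 else 1)"
  have run_TP: "run (Theta N) (Theta_M0 M) (Seq (NewTransPre N t)) = Some M2"
    using Seq_NewTransPre[of t] pre_le
    by (subst run_TP_list[OF theta_invariant_Theta_M0[of N M], where Q = "{q. (q,t) \<in> thpairs N}"])
      (auto simp: M2_def fun_eq_iff split: tplace.split)
  have inv: "theta_invariant N M2" by (auto simp: theta_invariant_def M2_def)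
  have en2: "enabled (Theta N) M2 (OldT t)" by (simp add: enabled_OldT_iff M2_def pre_le)
  have "fire (Theta N) M2 (OldT t) = Theta_M0 (fire N M t)"
    unfolding fire_OldT[OF inv en2] fire_enabled[OF wf en]
    by (auto simp: M2_def fun_eq_iff split: tplace.split)
  with run_TP en2 t show ?thesis by (simp add: run_append)
qed

lemma run_expand: "run N M \<alpha> = Some M' \<Longrightarrow> run (Theta N) (Theta_M0 M) (expand N \<alpha>)
  = Some (Theta_M0 M')"
proof (induction \<alpha> arbitrary: M)
  case (Cons t \<alpha>)
  then have t: "t \<in> transs N" "enabled N M t" and run: "run N (fire N M t) \<alpha> = Some M'"
    by (auto split: if_splits)
  have "expand N (t # \<alpha>) = (Seq (NewTransPre N t) @ [OldT t]) @ expand N \<alpha>" by simp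
  with run_expand_step[OF t] Cons.IH[OF run] show ?case by (simp only: run_append) simp
qed simp

lemma count_expand_OldT: "count_list (expand N \<alpha>) (OldT t) = count_list \<alpha> t"
  by (induction \<alpha>) (auto simp: Seq_NewTransPre count_list_0_iff)

lemma count_expand_TP:
  "count_list (expand N \<alpha>) (TP p t) = (if (p,t) \<in> thpairs N then count_list \<alpha> t else 0)"
  by (induction \<alpha>) (auto simp: count_list_distinct Seq_NewTransPre)

lemma count_reduce_OldT: "count_list (reduce N us) (OldT t) = count_list us (OldT t)"
  by (induction us) (auto simp: NewTrans_eq)

lemma count_reduce_TP_unconsumed:
  "(p,t) \<in> thpairs N \<Longrightarrow> OldT t \<notin> set us \<Longrightarrow> count_list (reduce N us) (TP p t) = 0"
  by (induction us) (auto simp: NewTrans_eq target_TP)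

text \<open>
  M' may have fewer tokens than M only on buffer places that no later transition consumes;
  the new transitions dropped by reduce feed only such places.
\<close>
lemma run_reduce:
  assumes "run (Theta N) M us \<noteq> None"
    and "\<forall>x. x \<notin> {PA q t | q t. OldT t \<notin> set us} \<longrightarrow> M x \<le> M' x"
  shows "run (Theta N) M' (reduce N us) \<noteq> None"
  using assms
proof (induction us arbitrary: M M')
  case (Cons u us)
  from Cons.prems(1) have u: "u \<in> transs (Theta N)" "enabled (Theta N) M u"
    and run: "run (Theta N) (fire (Theta N) M u) us \<noteq> None" by (auto split: if_splits)
  have le: "M x \<le> M' x" if "x \<notin> {PA q t | q t. OldT t \<notin> set us}" for x
    using Cons.prems(2) that by auto
  show ?case
  proof (cases "u \<in> NewTrans N \<and> target N u \<notin> set us")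
    case True
    then obtain p t where u_TP: "u = TP p t" and "OldT t \<notin> set us"
      by (auto simp: NewTrans_eq target_TP)
    have "fire (Theta N) M u x \<le> M' x" if "x \<notin> {PA q t | q t. OldT t \<notin> set us}" for x
    proof -
      have "M x \<le> M' x" using le that .
      moreover have "x \<noteq> PA p t" using that \<open>OldT t \<notin> set us\<close> by blast
      ultimately show ?thesis unfolding fire_Theta[OF u(2)] using u_TP by (cases x) auto
    qed
    with Cons.IH[OF run] True show ?thesis by simp
  next
    case False
    have "pre (Theta N) x u \<le> M' x" for x
    proof (cases "x \<in> {PA q t | q t. OldT t \<notin> set (u # us)}")
      case True
      then show ?thesis by (cases u) auto
    next
      case False
      then show ?thesis
        using Cons.prems(2) u(2) enabled_Theta_iff order_trans by blast
    qed
    then have en': "enabled (Theta N) M' u" by (simp add: enabled_Theta_iff)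
    have "fire (Theta N) M u x \<le> fire (Theta N) M' u x"
      if "x \<notin> {PA q t | q t. OldT t \<notin> set us}" for x
      using le[OF that] by (simp add: fire_Theta[OF u(2)] fire_Theta[OF en'])
    then have "run (Theta N) (fire (Theta N) M' u) (reduce N us) \<noteq> None"
      by (intro Cons.IH[OF run]) blast
    with False en' u(1) show ?thesis by auto
  qed
qed simp

lemma fire_PA_other:
  "enabled (Theta N) M u \<Longrightarrow> u \<noteq> OldT t \<Longrightarrow> u \<noteq> TP p t \<Longrightarrow>
   fire (Theta N) M u (PA p t) = M (PA p t)"
  by (cases u) (auto simp: fire_Theta)

text \<open>
  Each occurrence of TP p t kept by reduce is answered by a later t, and so is a token that is
  initially buffered on PA p t.
\<close>
lemma count_reduce_TP:
  "theta_invariant N M \<Longrightarrow> run (Theta N) M us \<noteq> None \<Longrightarrow> (p,t) \<in> thpairs N \<Longrightarrow>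
   OldT t \<in> set us \<Longrightarrow> count_list (reduce N us) (TP p t) + M (PA p t) = count_list us (OldT t)"
proof (induction us arbitrary: M)
  case (Cons u us)
  note inv = Cons.prems(1) and pt = Cons.prems(3)
  from Cons.prems(2) have u: "u \<in> transs (Theta N)" "enabled (Theta N) M u"
    and run: "run (Theta N) (fire (Theta N) M u) us \<noteq> None" by (auto split: if_splits)
  note IH = Cons.IH[OF theta_invariant_fire[OF inv u] run pt]
  consider "u = OldT t" | "u = TP p t" | "u \<noteq> OldT t" "u \<noteq> TP p t" by blast
  then show ?case
  proof cases
    case 1
    have "M (PA p t) = 1" using theta_invariant_PA[OF inv pt] u(2) 1 pt
      by (simp add: enabled_OldT_iff)
    moreover have "fire (Theta N) M u (PA p t) = 0" using fire_OldT[OF inv] u(2) 1 pt by simp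
    ultimately show ?thesis
      using IH count_reduce_TP_unconsumed[OF pt] 1
        by (cases "OldT t \<in> set us") (auto simp: NewTrans_eq)
  next
    case 2
    have "M (PA p t) = 0" using theta_invariant_PB[OF inv pt] u(2) 2 pt
      by (simp add: enabled_TP_iff)
    moreover have "fire (Theta N) M u (PA p t) = 1" using fire_TP[OF inv pt] u(2) 2 by simp
    moreover have "OldT t \<in> set us" using Cons.prems(4) 2 by simp
    ultimately show ?thesis using IH 2 pt by (simp add: NewTrans_eq target_TP)
  next
    case 3
    then have "OldT t \<in> set us" using Cons.prems(4) by simp
    with IH 3 show ?thesis using fire_PA_other[OF u(2) 3] by auto
  qed
qed simp

lemma parikh_expand_project_old:
  assumes run: "run (Theta N) (Theta_M0 M0) us \<noteq> None"
  shows "parikh (expand N (project_old us)) = parikh (reduce N us)"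
proof
  fix u
  show "parikh (expand N (project_old us)) u = parikh (reduce N us) u"
  proof (cases u)
    case (OldT t)
    then show ?thesis
      by (simp add: parikh_def count_expand_OldT count_project_old count_reduce_OldT)
  next
    case (TP p t)
    consider "(p,t) \<in> thpairs N" "OldT t \<in> set us" | "(p,t) \<in> thpairs N" "OldT t \<notin> set us"
      | "(p,t) \<notin> thpairs N" by blast
    then show ?thesis
    proof cases
      case 1
      with count_reduce_TP[OF theta_invariant_Theta_M0 run] TP show ?thesis
        by (simp add: parikh_def count_expand_TP count_project_old)
    next
      case 2
      with TP show ?thesis
        by (simp add: parikh_def count_expand_TP count_project_old count_reduce_TP_unconsumed)
    next
      case 3
      then have "TP p t \<notin> set (reduce N us)"
        using set_reduce_subset[of N us] set_run_subset_transs[OF run] by auto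
      with 3 TP show ?thesis by (simp add: parikh_def count_expand_TP)
    qed
  qed
qed

lemma feasible_expand: "feasible N M0 \<alpha> \<Longrightarrow> feasible (Theta N) (Theta_M0 M0) (expand N \<alpha>)"
  unfolding feasible_def using run_expand by blast

lemma feasible_reduce:
  "feasible (Theta N) (Theta_M0 M0) us \<Longrightarrow> feasible (Theta N) (Theta_M0 M0) (reduce N us)"
  unfolding feasible_def using run_reduce by blast

lemma feasible_project_old:
  assumes "feasible (Theta N) (Theta_M0 M0) us"
  shows "feasible N M0 (project_old us)"
proof -
  obtain M where "run (Theta N) (Theta_M0 M0) us = Some M" using assms by (auto simp: feasible_def)
  from run_Theta_collapse[OF theta_invariant_Theta_M0 this] show ?thesis
    by (simp add: feasible_def collapse_Theta_M0)
qed


lemma reduce_parikh_expand: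
  assumes "feasible (Theta N) (Theta_M0 M0) us"
  shows "\<exists>\<alpha>. feasible N M0 \<alpha> \<and> feasible (Theta N) (Theta_M0 M0) (expand N \<alpha>) \<and>
    parikh (expand N \<alpha>) = parikh (reduce N us)"
proof (intro exI conjI)
  show "feasible N M0 (project_old us)" using feasible_project_old[OF assms] .
  then show "feasible (Theta N) (Theta_M0 M0) (expand N (project_old us))" by (rule feasible_expand)
  show "parikh (expand N (project_old us)) = parikh (reduce N us)"
    using assms by (simp add: feasible_def parikh_expand_project_old)
qed

end

section \<open>Structural bounds, deadlocks and liveness\<close>

text \<open>
  Collapsing maps the columns of the incidence matrix of the transformed net to those of N, and
  the columns of new transitions to zero; so solutions of the state equation collapse to
  solutions of the state equation of N.
\<close>
definition inc_old :: "('p,'t) pnet \<Rightarrow> 'p \<Rightarrow> ('p,'t) ttrans \<Rightarrow> int" where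
  "inc_old N q u = (case u of OldT t \<Rightarrow> inc N q t | TP _ _ \<Rightarrow> 0)"

lemma inc_Theta_PA_PB: "(p,t) \<in> thpairs N \<Longrightarrow> inc (Theta N) (PA p t) u + inc (Theta N) (PB p t) u = 0"
  by (cases u) (auto simp: inc_def)

lemma inc_Theta_Old_thpair:
  assumes "(q,t) \<in> thpairs N"
  shows "inc (Theta N) (Old q) u + int (pre N q t) * inc (Theta N) (PA q t) u = inc_old N q u"
proof -
  have "(q,t') \<in> thpairs N \<longleftrightarrow> t' = t" for t' using assms thpairs_unique[of q t N t'] by auto
  with assms show ?thesis by (cases u) (auto simp: inc_def inc_old_def)
qed

lemma inc_Theta_Old_no_thpair: "\<forall>t. (q,t) \<notin> thpairs N \<Longrightarrow> inc (Theta N) (Old q) u = inc_old N q u"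
  by (cases u) (auto simp: inc_def inc_old_def)

context wf_pnet
begin

lemma sum_inc_old:
  "(\<Sum>u\<in>transs (Theta N). inc_old N q u * Y u) = (\<Sum>t\<in>transs N. inc N q t * Y (OldT t))"
proof -
  have "finite (transs (Theta N))" using wf_Theta by (simp add: wf_net_def)
  then have "(\<Sum>u\<in>transs (Theta N). inc_old N q u * Y u) = (\<Sum>u\<in>OldT ` transs N. inc_old N q u * Y u)"
    by (intro sum.mono_neutral_right) (auto simp: transs_Theta inc_old_def)
  also have "\<dots> = (\<Sum>t\<in>transs N. inc N q t * Y (OldT t))"
    by (subst sum.reindex) (auto simp: inj_on_def inc_old_def)
  finally show ?thesis .
qed

context
  fixes M :: "('p,'t) tplace \<Rightarrow> nat" and M0 :: "'p \<Rightarrow> nat" and Y :: "('p,'t) ttrans \<Rightarrow> nat"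
  assumes state_eq: "\<forall>x \<in> places (Theta N).
    int (M x) = int (Theta_M0 M0 x) + (\<Sum>u\<in>transs (Theta N). inc (Theta N) x u * int (Y u))"
begin

lemma state_equation_PA_PB: "(p,t) \<in> thpairs N \<Longrightarrow> M (PA p t) + M (PB p t) = 1"
proof -
  assume pt: "(p,t) \<in> thpairs N"
  have "(\<Sum>u\<in>transs (Theta N). inc (Theta N) (PA p t) u * int (Y u))
      + (\<Sum>u\<in>transs (Theta N). inc (Theta N) (PB p t) u * int (Y u))
      = (\<Sum>u\<in>transs (Theta N). (inc (Theta N) (PA p t) u + inc (Theta N) (PB p t) u) * int (Y u))"
    by (simp add: sum.distrib distrib_right)
  also have "\<dots> = 0" using inc_Theta_PA_PB[OF pt] by simp
  finally have "int (M (PA p t)) + int (M (PB p t)) = 1" using state_eq pt by simp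
  then show ?thesis by linarith
qed

lemma state_equation_collapse:
  assumes q: "q \<in> places N"
  shows "int (collapse N M q) = int (M0 q) + (\<Sum>t\<in>transs N. inc N q t * int (Y (OldT t)))"
proof (cases "\<exists>t. (q,t) \<in> thpairs N")
  case True
  then obtain t where pt: "(q,t) \<in> thpairs N" by blast
  let ?S = "\<lambda>x. \<Sum>u\<in>transs (Theta N). inc (Theta N) x u * int (Y u)"
  have "int (collapse N M q) = int (M (Old q)) + int (pre N q t) * int (M (PA q t))"
    by (simp add: collapse_thpair[OF pt])
  also have "\<dots> = int (M0 q) + ?S (Old q) + int (pre N q t) * ?S (PA q t)"
    using state_eq[rule_format, of "Old q"] state_eq[rule_format, of "PA q t"] q pt by simp
  also have "\<dots> = int (M0 q) + (\<Sum>u\<in>transs (Theta N).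
      (inc (Theta N) (Old q) u + int (pre N q t) * inc (Theta N) (PA q t) u) * int (Y u))"
    by (simp add: sum.distrib sum_distrib_left distrib_right mult.assoc)
  also have "\<dots> = int (M0 q) + (\<Sum>t\<in>transs N. inc N q t * int (Y (OldT t)))"
    by (simp only: inc_Theta_Old_thpair[OF pt] sum_inc_old)
  finally show ?thesis .
next
  case False
  then show ?thesis
    using state_eq q by (simp add: collapse_no_thpair inc_Theta_Old_no_thpair sum_inc_old)
qed

end

lemma struct_bounded_Theta:
  assumes bounded: "\<forall>p \<in> places N. struct_bounded N M0 p" and x: "x \<in> places (Theta N)"
  shows "struct_bounded (Theta N) (Theta_M0 M0) x"
proof (cases x)
  case (Old p)
  with x bounded have "struct_bounded N M0 p" by simp
  then obtain b where b: "\<forall>M' Y'. (\<forall>q \<in> places N.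
      int (M' q) = int (M0 q) + (\<Sum>t \<in> transs N. inc N q t * int (Y' t))) \<longrightarrow> M' p \<le> b"
    unfolding struct_bounded_def by blast
  show ?thesis unfolding struct_bounded_def
  proof (intro exI allI impI)
    fix M Y
    assume state_eq: "\<forall>x \<in> places (Theta N). int (M x) = int (Theta_M0 M0 x)
      + (\<Sum>u\<in>transs (Theta N). inc (Theta N) x u * int (Y u))"
    have "collapse N M p \<le> b"
      using b[rule_format, of "collapse N M" "\<lambda>t. Y (OldT t)"] state_equation_collapse[OF state_eq]
      by blast
    then show "M x \<le> b" using Old by (simp add: collapse_def)
  qed
next
  case (PA p t)
  show ?thesis unfolding struct_bounded_def
  proof (intro exI[of _ 1] allI impI)
    fix M Y
    assume state_eq: "\<forall>x \<in> places (Theta N). int (M x) = int (Theta_M0 M0 x)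
      + (\<Sum>u\<in>transs (Theta N). inc (Theta N) x u * int (Y u))"
    then show "M x \<le> 1" using state_equation_PA_PB[OF state_eq, of p t] PA x by simp
  qed
next
  case (PB p t)
  show ?thesis unfolding struct_bounded_def
  proof (intro exI[of _ 1] allI impI)
    fix M Y
    assume state_eq: "\<forall>x \<in> places (Theta N). int (M x) = int (Theta_M0 M0 x)
      + (\<Sum>u\<in>transs (Theta N). inc (Theta N) x u * int (Y u))"
    then show "M x \<le> 1" using state_equation_PA_PB[OF state_eq, of p t] PB x by simp
  qed
qed

lemma reach_Theta:
  assumes "M \<in> reach (Theta N) (Theta_M0 M0)"
  shows "theta_invariant N M" and "collapse N M \<in> reach N M0"
proof -
  obtain us where run: "run (Theta N) (Theta_M0 M0) us = Some M"
    using assms unfolding reach_def by blast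
  show "theta_invariant N M" using run_Theta_invariant[OF theta_invariant_Theta_M0 run] .
  show "collapse N M \<in> reach N M0"
    using run_Theta_collapse[OF theta_invariant_Theta_M0 run] run_Some_reach
    by (fastforce simp: collapse_Theta_M0)
qed

lemma Theta_M0_reach:
  "M \<in> reach N M0 \<Longrightarrow> Theta_M0 M \<in> reach (Theta N) (Theta_M0 M0)"
  unfolding reach_def using run_expand by blast

lemma deadlockable_Theta_iff: "deadlockable (Theta N) (Theta_M0 M0) \<longleftrightarrow> deadlockable N M0"
proof
  assume "deadlockable (Theta N) (Theta_M0 M0)"
  then obtain M where M: "M \<in> reach (Theta N) (Theta_M0 M0)"
    and dead: "\<forall>u \<in> transs (Theta N). \<not> enabled (Theta N) M u"
    unfolding deadlockable_def by blast
  have "\<not> enabled N (collapse N M) t" if "t \<in> transs N" for t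
  proof
    assume "enabled N (collapse N M) t"
    with reach_Theta(1)[OF M] show False
      by (cases rule: enabled_collapse_cases) (use dead that in auto)
  qed
  with reach_Theta(2)[OF M] show "deadlockable N M0" unfolding deadlockable_def by blast
next
  assume "deadlockable N M0"
  then obtain M where M: "M \<in> reach N M0" and dead: "\<forall>t \<in> transs N. \<not> enabled N M t"
    unfolding deadlockable_def by blast
  have "\<exists>us M'. run (Theta N) (Theta_M0 M) us = Some M' \<and>
      (\<forall>u \<in> transs (Theta N). \<not> enabled (Theta N) M' u)"
    using reach_dead_Theta[OF theta_invariant_Theta_M0[of N M]] dead
      by (simp add: collapse_Theta_M0)
  then obtain us M' where "run (Theta N) (Theta_M0 M) us = Some M'"
    and "\<forall>u \<in> transs (Theta N). \<not> enabled (Theta N) M' u" by blast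
  with reach_trans[OF Theta_M0_reach[OF M] run_Some_reach]
    show "deadlockable (Theta N) (Theta_M0 M0)"
    unfolding deadlockable_def by blast
qed

lemma live_Theta_imp_live:
  assumes live: "live (Theta N) (Theta_M0 M0)"
  shows "live N M0"
  unfolding live_def
proof (intro ballI)
  fix t M
  assume t: "t \<in> transs N" and M: "M \<in> reach N M0"
  then obtain M' where M': "M' \<in> reach (Theta N) (Theta_M0 M)" "enabled (Theta N) M' (OldT t)"
    using live Theta_M0_reach[OF M] unfolding live_def by fastforce
  have "theta_invariant N M'" "collapse N M' \<in> reach N M"
    using reach_Theta[OF M'(1)] by (simp_all add: collapse_Theta_M0)
  with enabled_collapse M'(2) show "\<exists>M''\<in>reach N M. enabled N M'' t" by blast
qed

lemma reach_enabled_OldT: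
  assumes live: "live N M0" and inv: "theta_invariant N M" and M: "collapse N M \<in> reach N M0"
    and t: "t \<in> transs N"
  shows "\<exists>M' \<in> reach (Theta N) M. enabled (Theta N) M' (OldT t)"
proof -
  obtain M1 \<sigma> where run: "run N (collapse N M) \<sigma> = Some M1" and en: "enabled N M1 t"
    using live M t unfolding live_def reach_def by blast
  obtain us M2 where us: "run (Theta N) M us = Some M2" "theta_invariant N M2" "collapse N M2 = M1"
    using simulate_run[OF inv run] by blast
  obtain vs M3 where "run (Theta N) M2 vs = Some M3" "enabled (Theta N) M3 (OldT t)"
    using prepare_OldT[OF us(2)] us(3) en by blast
  with run_append_Some[OF us(1)] show ?thesis using run_Some_reach by blast
qed

text \<open>
  TP p t needs an empty buffer PA p t and enough tokens on p: fire t once to empty the buffer,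
  then let N enable t again, simulating that run without refilling the buffer.
\<close>
lemma reach_enabled_TP:
  assumes live: "live N M0" and inv: "theta_invariant N M" and M: "collapse N M \<in> reach N M0"
    and pt: "(p,t) \<in> thpairs N"
  shows "\<exists>M' \<in> reach (Theta N) M. enabled (Theta N) M' (TP p t)"
proof -
  have t: "t \<in> transs N" using thpairsD(2)[OF pt] .
  obtain M1 \<sigma> where run1: "run N (collapse N M) \<sigma> = Some M1" and en1: "enabled N M1 t"
    using live M t unfolding live_def reach_def by blast
  have "M1 \<in> reach N M0" using reach_trans[OF M run_Some_reach[OF run1]] .
  moreover have "fire N M1 t \<in> reach N M1" using run_Some_reach[of N M1 "[t]"] en1 t by simp
  ultimately have "fire N M1 t \<in> reach N M0" by (rule reach_trans)
  then obtain M3 \<sigma>' where run3: "run N (fire N M1 t) \<sigma>' = Some M3" and en3: "enabled N M3 t"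
    using live t unfolding live_def reach_def by blast
  obtain us Ma where a: "run (Theta N) M us = Some Ma" "theta_invariant N Ma" "collapse N Ma = M1"
    using simulate_run[OF inv run1] by blast
  have "enabled N (collapse N Ma) t" using a(3) en1 by simp
  then obtain vs Mb where b: "run (Theta N) Ma vs = Some Mb" "theta_invariant N Mb"
      "collapse N Mb = fire N (collapse N Ma) t"
      "\<forall>q t'. (q,t') \<in> thpairs N \<longrightarrow> Mb (PA q t') = (if t' = t then 0 else Ma (PA q t'))"
    by (rule simulate_fire[OF a(2) t])
  have "run N (collapse N Mb) \<sigma>' = Some M3" using run3 a(3) b(3) by simp
  moreover have "Mb (PA p t) = 0" using b(4) pt by simp
  ultimately obtain ws Mc where c: "run (Theta N) Mb ws = Some Mc" "theta_invariant N Mc"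
      "collapse N Mc = M3" "Mc (PA p t) = 0"
    using simulate_run[OF b(2)] pt by blast
  have "pre N p t \<le> collapse N Mc p" using en3 c(3) by (simp add: enabled_iff_pre_le[OF wf])
  then have "enabled (Theta N) Mc (TP p t)"
    using c(4) theta_invariantD[OF c(2) pt]
      by (simp add: enabled_TP_iff[OF pt] collapse_thpair[OF pt])
  moreover have "run (Theta N) M (us @ vs @ ws) = Some Mc"
    using a(1) b(1) c(1) by (simp add: run_append)
  ultimately show ?thesis using run_Some_reach by blast
qed

lemma live_imp_live_Theta:
  assumes live: "live N M0"
  shows "live (Theta N) (Theta_M0 M0)"
  unfolding live_def
proof (intro ballI)
  fix u M
  assume u: "u \<in> transs (Theta N)" and M: "M \<in> reach (Theta N) (Theta_M0 M0)"
  note reach = reach_Theta[OF M]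
  show "\<exists>M' \<in> reach (Theta N) M. enabled (Theta N) M' u"
  proof (cases u)
    case (OldT t)
    with u reach_enabled_OldT[OF live reach] show ?thesis by simp
  next
    case (TP p t)
    with u reach_enabled_TP[OF live reach] show ?thesis by simp
  qed
qed

lemma live_Theta_iff: "live (Theta N) (Theta_M0 M0) \<longleftrightarrow> live N M0"
  using live_Theta_imp_live live_imp_live_Theta by blast

end

theorem mainTheorem8:
  fixes N :: "('p,'t) pnet" and M0 :: "'p \<Rightarrow> nat"
  assumes "wf_net N"
  shows
    "(oneS N \<longrightarrow> oneS (Theta N)) \<and>
     (homogeneous N \<longrightarrow> homogeneous (Theta N)) \<and>
     (H1S_WMG_le N \<longrightarrow> H1S_WMG_le (Theta N)) \<and>
     (strongly_connected N \<and> H1S_WMG_le N \<and> strongly_connected (shared_deletion N) \<longrightarrow>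
        strongly_connected (Theta N) \<and> H1S_WMG_le (Theta N) \<and>
        strongly_connected (shared_deletion (Theta N)))
   \<and> (\<forall>\<alpha>. feasible N M0 \<alpha> \<longrightarrow> feasible (Theta N) (Theta_M0 M0) (expand N \<alpha>))
   \<and> (\<forall>\<beta>'. feasible (Theta N) (Theta_M0 M0) \<beta>' \<longrightarrow>
        feasible (Theta N) (Theta_M0 M0) (reduce N \<beta>') \<and>
        (\<exists>\<alpha>. feasible N M0 \<alpha> \<and> feasible (Theta N) (Theta_M0 M0) (expand N \<alpha>) \<and>
             parikh (expand N \<alpha>) = parikh (reduce N \<beta>')))
   \<and> ((\<forall>p \<in> places N. struct_bounded N M0 p) \<longrightarrow>
        (\<forall>p \<in> places (Theta N). struct_bounded (Theta N) (Theta_M0 M0) p))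
   \<and> (deadlockable (Theta N) (Theta_M0 M0) \<longleftrightarrow> deadlockable N M0)
   \<and> (live (Theta N) (Theta_M0 M0) \<longleftrightarrow> live N M0)"
proof -
  interpret wf_pnet N using assms by (rule wf_pnet.intro)
  show ?thesis
    using oneS_Theta homogeneous_Theta H1S_WMG_le_Theta strongly_connected_Theta
      strongly_connected_shared_deletion_Theta feasible_expand feasible_reduce reduce_parikh_expand
      struct_bounded_Theta deadlockable_Theta_iff live_Theta_iff
    by blast
qed

end
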